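(* Let $\alpha,\beta\in(0,1)$ with $\alpha+\beta>1$. There is a constant $C$ (depending only on $\alpha,\beta$) such that for all sufficiently large $k$: with the medium-expectation rounding defined in the context, if $X_i$ ($i\in\mathcal{M}_1^*(k)$) are independent indicators with $\mathbb{E}[X_i]=p_i$ and $Y_i$ ($i\in\mathcal{M}_1^*(k)$) are independent indicators with $\mathbb{E}[Y_i]=q_i$, then $$\left\|\sum_{i\in\mathcal{M}_1^*(k)}X_i-\sum_{i\in\mathcal{M}_1^*(k)}Y_i\right\|\le C\left(k^{-\frac{\alpha+\beta-1}{2}}+k^{-\alpha}+k^{-1/2}+k^{-(1-\beta)}\right).$$
   Context: $\|\cdot\|$ is total variation distance. Let $k$ be a positive integer, $\alpha\in(0,1)$, and $p_1,\dots,p_n\in[0,1]$. For $j=0,1,\dots,\lfloor k/2\rfloor$ let $I_j=[j/k,(j+1)/k)$ if $j<\lfloor k/2\rfloor$ and $I_{\lfloor k/2\rfloor}=[\lfloor k/2\rfloor/k,1/2]$; let $I^*_j=\{i:p_i\in I_j\}=\{j_1,\dots,j_{n_j}\}$ (listed in some fixed order, $n_j=|I^*_j|$), $p^j_i:=p_{j_i}$ and $\delta^j_i:=p^j_i-j/k$. Let $\mathcal{M}_1^*(k)=\bigcup_{j=\lfloor k^\alpha\rfloor}^{\lfloor k/2\rfloor}I^*_j$. Medium-expectation rounding: for $j=\lfloor k^\alpha\rfloor,\dots,\lfloor k/2\rfloor$ let $S_j=\sum_{i=1}^{n_j}\delta^j_i$, $m_j=\lfloor kS_j\rfloor$, and set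 $q_{j_i}=(j+1)/k$ for $i=1,\dots,m_j$ and $q_{j_i}=j/k$ for $i=m_j+1,\dots,n_j$. *)

theory Defs
  imports "HOL-Probability.Probability"
begin

definition sum_indicators_law :: "nat set \<Rightarrow> (nat \<Rightarrow> real) \<Rightarrow> nat pmf" where
  "sum_indicators_law A p =
     map_pmf (\<lambda>x. card {i\<in>A. x i}) (Pi_pmf A False (\<lambda>i. bernoulli_pmf (p i)))"

definition tv_dist :: "nat pmf \<Rightarrow> nat pmf \<Rightarrow> real" where
  "tv_dist P Q = (SUP A. \<bar>measure_pmf.prob P A - measure_pmf.prob Q A\<bar>)"

definition bucket :: "nat \<Rightarrow> nat \<Rightarrow> real set" where
  "bucket k j = (if j < k div 2 then {x. real j / real k \<le> x \<and> x < real (j+1) / real k}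
                 else {x. real (k div 2) / real k \<le> x \<and> x \<le> 1/2})"

definition Istar :: "nat \<Rightarrow> nat \<Rightarrow> (nat \<Rightarrow> real) \<Rightarrow> nat \<Rightarrow> nat set" where
  "Istar n k p j = {i\<in>{1..n}. p i \<in> bucket k j}"

definition medium_range :: "real \<Rightarrow> nat \<Rightarrow> nat set" where
  "medium_range \<alpha> k = {nat \<lfloor>real k powr \<alpha>\<rfloor> .. k div 2}"

definition M1star :: "real \<Rightarrow> nat \<Rightarrow> nat \<Rightarrow> (nat \<Rightarrow> real) \<Rightarrow> nat set" where
  "M1star \<alpha> n k p = (\<Union>j\<in>medium_range \<alpha> k. Istar n k p j)"

definition S_j :: "nat \<Rightarrow> nat \<Rightarrow> (nat \<Rightarrow> real) \<Rightarrow> nat \<Rightarrow> real" where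
  "S_j n k p j = (\<Sum>i\<in>Istar n k p j. p i - real j / real k)"

definition m_j :: "nat \<Rightarrow> nat \<Rightarrow> (nat \<Rightarrow> real) \<Rightarrow> nat \<Rightarrow> int" where
  "m_j n k p j = \<lfloor>real k * S_j n k p j\<rfloor>"

text \<open>q is the medium-expectation rounding of p w.r.t. the enumerations enum j
  (enum j r = j_r, r = 1..n_j) of the sets I^*_j.\<close>
definition medium_rounding :: "real \<Rightarrow> nat \<Rightarrow> nat \<Rightarrow> (nat \<Rightarrow> real) \<Rightarrow> (nat \<Rightarrow> nat \<Rightarrow> nat)
    \<Rightarrow> (nat \<Rightarrow> real) \<Rightarrow> bool" where
  "medium_rounding \<alpha> n k p enum q \<longleftrightarrow>
     (\<forall>j\<in>medium_range \<alpha> k.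
        bij_betw (enum j) {1..card (Istar n k p j)} (Istar n k p j) \<and>
        (\<forall>r\<in>{1..card (Istar n k p j)}.
           q (enum j r) = (if int r \<le> m_j n k p j then real (j+1) / real k else real j / real k)))"

end

theory Submission
  imports Defs "HOL-Computational_Algebra.Polynomial"
begin

text \<open>
  The law of a sum of independent indicators with means \<open>p\<^sub>i\<close> has the generating polynomial
  \<open>\<Prod> ((1 - p\<^sub>i) + p\<^sub>i X)\<close>, so the total variation distance between two such laws is bounded
  by the \<open>\<ell>\<^sub>1\<close> norm of the difference of their generating polynomials.  A hybrid argument
  rounds one bucket \<open>I\<^sub>j\<close> at a time.  Inside a bucket of width \<open>h = 1/k\<close>, pairs of
  parameters are repeatedly exchanged for an endpoint of the bucket and a carried remainder;
  each exchange changes the polynomial by \<open>O(h\<^sup>2)\<close> times a second difference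
  \<open>(1 - X)\<^sup>2 \<Prod>\<close>, and the final remainder by \<open>O(h)\<close> times a first difference \<open>(1 - X) \<Prod>\<close>.
  Since all parameters of medium buckets lie in \<open>[c, 1 - c]\<close> with \<open>c = k\<^sup>\<alpha>\<^sup>-\<^sup>1/2\<close>, each Bernoulli
  factor contains a fair coin with probability \<open>2c\<close>, and the central binomial estimate turns
  this into the smoothing bounds \<open>\<parallel>(1 - X) \<Prod>\<parallel>\<^sub>1 = O((cM)\<^sup>-\<^sup>1\<^sup>/\<^sup>2)\<close> and
  \<open>\<parallel>(1 - X)\<^sup>2 \<Prod>\<parallel>\<^sub>1 = O((cM)\<^sup>-\<^sup>1)\<close> for \<open>M\<close> factors.  Summing over all buckets gives the error
  \<open>12 k\<^sup>-\<^sup>\<alpha> + 2 k\<^sup>-\<^sup>\<alpha>\<^sup>/\<^sup>2\<close>, which is dominated by the bound of the main theorem.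
\<close>


section \<open>The \<open>\<ell>\<^sub>1\<close> norm of real polynomials\<close>

text \<open>The \<open>\<ell>\<^sub>1\<close> norm of the coefficient sequence.  For generating polynomials of
  distributions on \<open>\<nat>\<close> it dominates the total variation distance.\<close>
definition l1_norm :: "real poly \<Rightarrow> real" where
  "l1_norm p = (\<Sum>i\<le>degree p. \<bar>coeff p i\<bar>)"

lemma l1_norm_eq_sum: "degree p \<le> N \<Longrightarrow> l1_norm p = (\<Sum>i\<le>N. \<bar>coeff p i\<bar>)"
  unfolding l1_norm_def by (intro sum.mono_neutral_left) (auto simp: coeff_eq_0)

lemma l1_norm_nonneg: "l1_norm p \<ge> 0"
  unfolding l1_norm_def by (intro sum_nonneg) auto

lemma l1_norm_zero [simp]: "l1_norm 0 = 0"
  by (simp add: l1_norm_def)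

lemma l1_norm_pCons: "l1_norm (pCons a p) = \<bar>a\<bar> + l1_norm p"
proof -
  have "l1_norm (pCons a p) = (\<Sum>i\<le>Suc (degree p). \<bar>coeff (pCons a p) i\<bar>)"
    by (rule l1_norm_eq_sum) (simp add: degree_pCons_le)
  also have "\<dots> = \<bar>a\<bar> + (\<Sum>i\<le>degree p. \<bar>coeff p i\<bar>)"
    by (subst sum.atMost_Suc_shift) simp
  finally show ?thesis by (simp add: l1_norm_def)
qed

lemma l1_norm_add: "l1_norm (p + q) \<le> l1_norm p + l1_norm q"
proof -
  let ?N = "max (degree p) (degree q)"
  have "l1_norm (p + q) = (\<Sum>i\<le>?N. \<bar>coeff (p + q) i\<bar>)"
    by (rule l1_norm_eq_sum) (simp add: degree_add_le)
  also have "\<dots> \<le> (\<Sum>i\<le>?N. \<bar>coeff p i\<bar> + \<bar>coeff q i\<bar>)"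
    by (intro sum_mono) (simp add: abs_triangle_ineq)
  also have "\<dots> = l1_norm p + l1_norm q"
    by (simp add: sum.distrib l1_norm_eq_sum[of p ?N] l1_norm_eq_sum[of q ?N])
  finally show ?thesis .
qed

lemma l1_norm_smult: "l1_norm (smult c p) = \<bar>c\<bar> * l1_norm p"
proof -
  have "l1_norm (smult c p) = (\<Sum>i\<le>degree p. \<bar>coeff (smult c p) i\<bar>)"
    by (rule l1_norm_eq_sum) (simp add: degree_smult_le)
  thus ?thesis by (simp add: l1_norm_def sum_distrib_left abs_mult)
qed

lemma l1_norm_mult: "l1_norm (p * q) \<le> l1_norm p * l1_norm q"
proof (induction p rule: pCons_induct)
  case 0 thus ?case by simp
next
  case (pCons a p)
  have "pCons a p * q = smult a q + pCons 0 (p * q)" by simp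
  hence "l1_norm (pCons a p * q) \<le> l1_norm (smult a q) + l1_norm (pCons 0 (p * q))"
    by (metis l1_norm_add)
  also have "\<dots> \<le> \<bar>a\<bar> * l1_norm q + l1_norm p * l1_norm q"
    using pCons.IH by (simp add: l1_norm_smult l1_norm_pCons)
  also have "\<dots> = l1_norm (pCons a p) * l1_norm q"
    by (simp add: l1_norm_pCons algebra_simps)
  finally show ?case .
qed

lemma l1_norm_mult_contraction: "l1_norm q \<le> 1 \<Longrightarrow> l1_norm (q * p) \<le> l1_norm p"
  using l1_norm_mult[of q p] mult_right_mono[of "l1_norm q" 1 "l1_norm p"] l1_norm_nonneg[of p]
  by simp


section \<open>Generating polynomials of Bernoulli variables\<close>

text \<open>\<open>bern r\<close> is the generating polynomial \<open>(1 - r) + r X\<close> of a Bernoulli(\<open>r\<close>) variable,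
  \<open>bern_prod\<close> that of a sum of independent Bernoulli variables, and multiplication by
  \<open>fin_diff = 1 - X\<close> takes finite differences of coefficient sequences.\<close>
definition bern :: "real \<Rightarrow> real poly" where
  "bern r = [:1 - r, r:]"

definition bern_prod :: "real list \<Rightarrow> real poly" where
  "bern_prod xs = prod_list (map bern xs)"

definition fin_diff :: "real poly" where
  "fin_diff = [:1, -1:]"

lemma bern_prod_Nil [simp]: "bern_prod [] = 1"
  and bern_prod_Cons [simp]: "bern_prod (x # xs) = bern x * bern_prod xs"
  and bern_prod_append: "bern_prod (xs @ ys) = bern_prod xs * bern_prod ys"
  and bern_prod_replicate: "bern_prod (replicate n x) = bern x ^ n"
  by (simp_all add: bern_prod_def)

lemma l1_norm_bern: "0 \<le> r \<Longrightarrow> r \<le> 1 \<Longrightarrow> l1_norm (bern r) = 1"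
  by (simp add: bern_def l1_norm_pCons l1_norm_def)

lemma coeff_bern_mult:
  "coeff (bern r * Q) x = (1 - r) * coeff Q x + (if x = 0 then 0 else r * coeff Q (x - 1))"
  by (cases x) (simp_all add: bern_def coeff_pCons')

lemma degree_prod_bern: "finite A \<Longrightarrow> degree (\<Prod>i\<in>A. bern (p i)) \<le> card A"
proof (induction A rule: finite_induct)
  case (insert a A)
  have "degree (bern (p a) * (\<Prod>i\<in>A. bern (p i))) \<le> degree (bern (p a)) + degree (\<Prod>i\<in>A. bern (p i))"
    by (rule degree_mult_le)
  also have "\<dots> \<le> 1 + card A" using insert by (simp add: bern_def)
  finally show ?case using insert by simp
qed simp

lemma prod_bern_as_list:
  fixes S :: "'a::linorder set"
  assumes "finite S"
  obtains rs where "(\<Prod>i\<in>S. bern (f i)) = bern_prod rs" "set rs = f ` S" "length rs = card S"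
proof
  let ?rs = "map f (sorted_list_of_set S)"
  show "(\<Prod>i\<in>S. bern (f i)) = bern_prod ?rs"
    using assms by (simp add: bern_prod_def prod.distinct_set_conv_list[symmetric] o_def)
  show "set ?rs = f ` S" "length ?rs = card S" using assms by simp_all
qed


section \<open>Sums of independent indicators and total variation\<close>

lemma card_fun_upd:
  assumes "finite A" "a \<notin> A"
  shows "card {i\<in>insert a A. (f(a:=y)) i} = (if y then 1 else 0) + card {i\<in>A. f i}"
proof -
  have eq: "{i\<in>A. (f(a:=y)) i} = {i\<in>A. f i}" using assms(2) by auto
  show ?thesis
  proof (cases y)
    case True
    hence "{i\<in>insert a A. (f(a:=y)) i} = insert a {i\<in>A. (f(a:=y)) i}" by auto
    thus ?thesis using True assms eq by simp
  next
    case False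
    hence "{i\<in>insert a A. (f(a:=y)) i} = {i\<in>A. (f(a:=y)) i}" by auto
    thus ?thesis using False eq by simp
  qed
qed

lemma sum_indicators_law_insert:
  assumes "finite A" "a \<notin> A"
  shows "sum_indicators_law (insert a A) p =
    bind_pmf (bernoulli_pmf (p a))
      (\<lambda>y. map_pmf (\<lambda>c. (if y then 1 else 0) + c) (sum_indicators_law A p))"
proof -
  let ?B = "\<lambda>i. bernoulli_pmf (p i)"
  have "sum_indicators_law (insert a A) p = map_pmf (\<lambda>x. card {i\<in>insert a A. x i})
      (bind_pmf (?B a) (\<lambda>y. bind_pmf (Pi_pmf A False ?B) (\<lambda>f. return_pmf (f(a:=y)))))"
    unfolding sum_indicators_law_def using assms by (subst Pi_pmf_insert') auto
  also have "\<dots> = bind_pmf (?B a) (\<lambda>y. bind_pmf (Pi_pmf A False ?B)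
        (\<lambda>f. return_pmf (card {i\<in>insert a A. (f(a:=y)) i})))"
    by (simp add: map_bind_pmf del: fun_upd_apply)
  also have "\<dots> = bind_pmf (?B a) (\<lambda>y. bind_pmf (Pi_pmf A False ?B)
        (\<lambda>f. return_pmf ((if y then 1 else 0) + card {i\<in>A. f i})))"
    by (simp only: card_fun_upd[OF assms])
  also have "\<dots> = bind_pmf (?B a) (\<lambda>y. map_pmf (\<lambda>c. (if y then 1 else 0) + c) (sum_indicators_law A p))"
    unfolding sum_indicators_law_def by (simp add: map_pmf_def bind_assoc_pmf bind_return_pmf)
  finally show ?thesis .
qed

lemma pmf_map_Suc: "pmf (map_pmf Suc M) x = (if x = 0 then 0 else pmf M (x - 1))"
proof (cases x)
  case 0
  have "Suc -` {0} = {}" by auto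
  thus ?thesis using 0 by (simp add: pmf_map)
next
  case (Suc z)
  thus ?thesis using pmf_map_inj'[of Suc M z] by simp
qed

lemma pmf_sum_indicators_law:
  assumes "finite A" "\<forall>i\<in>A. 0 \<le> p i \<and> p i \<le> 1"
  shows "pmf (sum_indicators_law A p) x = coeff (\<Prod>i\<in>A. bern (p i)) x"
  using assms
proof (induction A arbitrary: x rule: finite_induct)
  case empty
  show ?case by (simp add: sum_indicators_law_def coeff_1 indicator_def)
next
  case (insert a A)
  have pa: "0 \<le> p a" "p a \<le> 1" using insert.prems by auto
  have shift: "((+) (Suc 0)) = Suc" "((+) (0::nat)) = (\<lambda>x. x)" by auto
  have "pmf (sum_indicators_law (insert a A) p) x
      = p a * pmf (map_pmf Suc (sum_indicators_law A p)) x + (1 - p a) * pmf (sum_indicators_law A p) x"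
    unfolding sum_indicators_law_insert[OF insert.hyps] pmf_bind using pa by (simp add: shift)
  also have "\<dots> = coeff (bern (p a) * (\<Prod>i\<in>A. bern (p i))) x"
    using insert.IH insert.prems by (simp add: pmf_map_Suc coeff_bern_mult algebra_simps)
  finally show ?case using insert.hyps by simp
qed

lemma tv_dist_le_l1_norm:
  assumes "finite A" "\<forall>i\<in>A. 0 \<le> p i \<and> p i \<le> 1" "\<forall>i\<in>A. 0 \<le> q i \<and> q i \<le> 1"
  shows "tv_dist (sum_indicators_law A p) (sum_indicators_law A q)
          \<le> l1_norm ((\<Prod>i\<in>A. bern (p i)) - (\<Prod>i\<in>A. bern (q i)))"
  unfolding tv_dist_def
proof (rule cSUP_least)
  fix B :: "nat set"
  let ?P = "sum_indicators_law A p" and ?Q = "sum_indicators_law A q"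
  let ?D = "(\<Prod>i\<in>A. bern (p i)) - (\<Prod>i\<in>A. bern (q i))"
  define N where "N = card A"
  have degs: "degree (\<Prod>i\<in>A. bern (p i)) \<le> N" "degree (\<Prod>i\<in>A. bern (q i)) \<le> N"
    using degree_prod_bern[OF assms(1)] unfolding N_def by auto
  have zP: "pmf ?P x = 0" and zQ: "pmf ?Q x = 0" if "x > N" for x
    using pmf_sum_indicators_law[OF assms(1,2), of x] pmf_sum_indicators_law[OF assms(1,3), of x]
      degs that by (simp_all add: coeff_eq_0)
  have "measure_pmf.prob ?P B = measure_pmf.prob ?P (B \<inter> {..N})"
    by (rule measure_prob_cong_0) (auto intro: zP)
  moreover have "measure_pmf.prob ?Q B = measure_pmf.prob ?Q (B \<inter> {..N})"
    by (rule measure_prob_cong_0) (auto intro: zQ)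
  ultimately have "measure_pmf.prob ?P B - measure_pmf.prob ?Q B = (\<Sum>x\<in>B \<inter> {..N}. coeff ?D x)"
    by (simp add: measure_measure_pmf_finite pmf_sum_indicators_law[OF assms(1,2)]
        pmf_sum_indicators_law[OF assms(1,3)] sum_subtractf)
  hence "\<bar>measure_pmf.prob ?P B - measure_pmf.prob ?Q B\<bar> \<le> (\<Sum>x\<in>B \<inter> {..N}. \<bar>coeff ?D x\<bar>)"
    by (simp add: sum_abs)
  also have "\<dots> \<le> (\<Sum>x\<le>N. \<bar>coeff ?D x\<bar>)" by (intro sum_mono2) auto
  also have "\<dots> = l1_norm ?D"
    using degree_diff_le[OF degs] by (rule l1_norm_eq_sum[symmetric])
  finally show "\<bar>measure_pmf.prob ?P B - measure_pmf.prob ?Q B\<bar> \<le> l1_norm ?D" .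
qed simp

section \<open>A central binomial estimate\<close>

lemma choose_odd_central: "(Suc (2*n) choose n) * (n+1) = (2*n+1) * ((2*n) choose n)"
proof -
  have "Suc (2*n) choose n = Suc (2*n) choose Suc n"
    using binomial_symmetric[of n "Suc (2*n)"] by (simp add: Suc_diff_le)
  moreover have "Suc n * (Suc (2*n) choose Suc n) = Suc (2*n) * ((2*n) choose n)"
    by (rule Suc_times_binomial)
  ultimately show ?thesis by (simp add: algebra_simps)
qed

lemma choose_even_central: "(Suc (Suc (2*n)) choose Suc n) = 2 * (Suc (2*n) choose n)"
proof -
  have "Suc (2*n) choose Suc n = Suc (2*n) choose n"
    using binomial_symmetric[of n "Suc (2*n)"] by (simp add: Suc_diff_le)
  thus ?thesis by simp
qed

lemma central_binomial_sq: "real ((2*n) choose n) ^ 2 * (2*n+1) \<le> 16 ^ n"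
proof (induction n)
  case 0 thus ?case by simp
next
  case (Suc n)
  define c where "c = real ((2*n) choose n)"
  have "real (Suc (2*n) choose n) = (2*n+1) * c / (n+1)"
    using arg_cong[OF choose_odd_central[of n], of real] unfolding c_def by (simp add: field_simps)
  hence next_central: "real ((2 * Suc n) choose Suc n) = 2 * (2*n+1) * c / (n+1)"
    using choose_even_central[of n] by (simp add: numeral_2_eq_2)
  have "4 * (2*real n+1) * (2*real n+3) \<le> 16 * (real n+1)^2"
    by (simp add: power2_eq_square algebra_simps)
  hence ratio: "4 * (2*real n+1) * (2*real n+3) / (real n+1)^2 \<le> 16"
    by (simp add: divide_le_eq)
  have "real ((2 * Suc n) choose Suc n) ^ 2 * (2 * Suc n + 1)
      = c^2 * (2*real n+1) * (4 * (2*real n+1) * (2*real n+3) / (real n+1)^2)"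
    unfolding next_central by (simp add: field_simps power2_eq_square)
  also have "\<dots> \<le> c^2 * (2*real n+1) * 16"
    using ratio by (intro mult_left_mono) auto
  also have "\<dots> \<le> 16 ^ n * 16" using Suc.IH unfolding c_def by (simp add: algebra_simps)
  finally show ?case by simp
qed

lemma central_binomial_bound: "real (a choose (a div 2)) / 2 ^ a \<le> 1 / sqrt (a + 1)"
proof -
  have sixteen: "(16::real)^n = (2^n)^4" for n
  proof -
    have "(2::real)^4 = 16" by simp
    thus ?thesis by (metis power_mult mult.commute)
  qed
  obtain n where "a = 2*n \<or> a = 2*n+1" by (metis oddE evenE)
  then show ?thesis
  proof
    assume a: "a = 2*n"
    have "(real ((2*n) choose n) / 2^(2*n)) ^ 2 \<le> 1 / (2*n+1)"
      using central_binomial_sq[of n] by (simp add: field_simps power_mult power_divide sixteen)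
    hence "real ((2*n) choose n) / 2^(2*n) \<le> sqrt (1 / (2*n+1))"
      using real_le_rsqrt by blast
    thus ?thesis using a by (simp add: real_sqrt_divide)
  next
    assume a: "a = 2*n+1"
    define X where "X = real (Suc (2*n) choose n)"
    have "real ((2*(n+1)) choose (n+1)) = 2 * X"
      unfolding X_def using choose_even_central[of n] by simp
    hence "4 * X^2 * (2*real n+3) \<le> 16 * 16^n"
      using central_binomial_sq[of "n+1"] by (simp add: algebra_simps power2_eq_square)
    moreover have "((2::real)^(2*n+1))^2 = 4 * 16^n"
    proof -
      have "((2::real)^(2*n+1))^2 = 4 * ((2^n)^2)^2"
        by (simp add: power_mult power_add power2_eq_square algebra_simps)
      also have "4 * (((2::real)^n)^2)^2 = 4 * (2^n)^4" by (simp add: power_mult[symmetric])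
      finally show ?thesis by (simp add: sixteen)
    qed
    ultimately have "(X / 2^(2*n+1)) ^ 2 \<le> 1 / (2*real n+3)"
      by (simp only: power_divide) (simp add: field_simps)
    also have "\<dots> \<le> 1 / (2*real n+2)" by (simp add: field_simps)
    finally have "(X / 2^(2*n+1)) ^ 2 \<le> 1 / (2*real n+2)" .
    hence "X / 2^(2*n+1) \<le> sqrt (1 / (2*real n+2))"
      using real_le_rsqrt by blast
    moreover have "a div 2 = n" using a by simp
    ultimately show ?thesis using a unfolding X_def by (simp add: real_sqrt_divide add.commute)
  qed
qed

lemma coeff_binomial_poly: "coeff ([:1,1:]^a) i = real (a choose i)"
proof (cases "i \<le> a")
  case True thus ?thesis by (simp add: coeff_linear_poly_power)
next
  case False
  hence "coeff ([:1,1:]^a) i = 0"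
    by (intro coeff_eq_0) (metis degree_linear_power le_less_trans not_le)
  thus ?thesis using False by (simp add: binomial_eq_0)
qed

abbreviation binomial_jump :: "nat \<Rightarrow> nat \<Rightarrow> real" where
  "binomial_jump a i \<equiv> \<bar>real (a choose i) - (if i = 0 then 0 else real (a choose (i - 1)))\<bar>"

text \<open>By unimodality of binomial coefficients, the total variation of the row \<open>binom(a, \<cdot>)\<close>
  telescopes: it rises to the central value and falls back to zero.\<close>
lemma binomial_jumps_rising: "m \<le> a div 2 \<Longrightarrow> (\<Sum>i\<le>m. binomial_jump a i) = real (a choose m)"
proof (induction m)
  case (Suc m)
  have "a choose m \<le> a choose Suc m" using Suc.prems by (intro binomial_mono) auto
  thus ?case using Suc by simp
qed simp

lemma binomial_step_down: "a div 2 \<le> i \<Longrightarrow> a choose Suc i \<le> a choose i"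
proof (cases "Suc i \<le> a")
  case True
  assume "a div 2 \<le> i" thus ?thesis using True by (intro binomial_antimono) auto
qed (simp add: binomial_eq_0)

lemma binomial_jumps_falling: "a div 2 \<le> m \<Longrightarrow>
  (\<Sum>i\<in>{a div 2<..Suc m}. binomial_jump a i) = real (a choose (a div 2)) - real (a choose Suc m)"
proof (induction m rule: dec_induct)
  case base
  have "{a div 2<..Suc (a div 2)} = {Suc (a div 2)}" by auto
  thus ?case using binomial_step_down[of a "a div 2"] by simp
next
  case (step m)
  have "{a div 2<..Suc (Suc m)} = insert (Suc (Suc m)) {a div 2<..Suc m}" using step.hyps by auto
  moreover have "a choose Suc (Suc m) \<le> a choose Suc m" using step by (intro binomial_step_down) auto
  ultimately show ?case using step by (simp add: of_nat_diff)
qed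

lemma l1_norm_fin_diff_half_power: "l1_norm (fin_diff * bern (1/2) ^ a) \<le> 2 / sqrt (a + 1)"
proof -
  define P where "P = ([:1,1:]^a :: real poly)"
  have half: "bern (1/2) ^ a = smult ((1/2)^a) P"
  proof -
    have half_coin: "bern (1/2) = smult (1/2) [:1,1:]" by (simp add: bern_def)
    show ?thesis by (simp only: P_def half_coin smult_power)
  qed
  have D: "fin_diff * P = P - pCons 0 P" by (simp add: fin_diff_def)
  have "degree P \<le> a" unfolding P_def by (simp add: degree_linear_power)
  hence "degree (fin_diff * P) \<le> a + 1"
    unfolding D using degree_pCons_le[of 0 P] by (intro degree_diff_le) auto
  hence "l1_norm (fin_diff * P) = (\<Sum>i\<le>a+1. \<bar>coeff (fin_diff * P) i\<bar>)"
    by (rule l1_norm_eq_sum)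
  also have "\<dots> = (\<Sum>i\<le>a+1. binomial_jump a i)"
    unfolding D by (intro sum.cong refl) (auto simp: P_def coeff_binomial_poly coeff_pCons')
  also have "{..a+1} = {..a div 2} \<union> {a div 2<..Suc a}" by auto
  also have "(\<Sum>i\<in>{..a div 2} \<union> {a div 2<..Suc a}. binomial_jump a i)
     = (\<Sum>i\<le>a div 2. binomial_jump a i) + (\<Sum>i\<in>{a div 2<..Suc a}. binomial_jump a i)"
    by (intro sum.union_disjoint) auto
  also have "\<dots> = 2 * real (a choose (a div 2))"
    using binomial_jumps_rising[of "a div 2" a] binomial_jumps_falling[of a a] by simp
  finally have "l1_norm (fin_diff * bern (1/2) ^ a) = 2 * real (a choose (a div 2)) / 2^a"
    by (simp add: half l1_norm_smult power_divide)
  thus ?thesis using central_binomial_bound[of a] by simp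
qed


section \<open>Smoothing by Bernoulli factors with parameters away from 0 and 1\<close>

text \<open>If \<open>c \<le> r \<le> 1 - c\<close>, then Bernoulli(\<open>r\<close>) is a mixture: with probability \<open>2c\<close> a fair coin,
  otherwise another Bernoulli variable.  This is what makes products of such factors smooth.\<close>
lemma bern_mixture:
  assumes "0 < c" "c < 1/2" "c \<le> r" "r \<le> 1 - c"
  shows "bern r = smult (1 - 2*c) (bern ((r - c) / (1 - 2*c))) + smult (2*c) (bern (1/2))"
  using assms by (simp add: bern_def field_simps)

definition binom_weight :: "real \<Rightarrow> nat \<Rightarrow> nat \<Rightarrow> real" where
  "binom_weight s L j = real (L choose j) * s^j * (1-s)^(L-j)"

lemma binom_weight_nonneg: "0 \<le> s \<Longrightarrow> s \<le> 1 \<Longrightarrow> binom_weight s L j \<ge> 0"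
  by (simp add: binom_weight_def)

lemma binom_weight_sum: "(\<Sum>j\<le>L. binom_weight s L j) = 1"
  using binomial_ring[of s "1-s" L] by (simp add: binom_weight_def)

lemma binom_weight_Suc_Suc:
  "j \<le> L \<Longrightarrow> binom_weight s (Suc L) (Suc j) = s * binom_weight s L j + (1-s) * binom_weight s L (Suc j)"
proof (cases "j = L")
  case False
  assume "j \<le> L"
  hence "L - j = Suc (L - Suc j)" using False by simp
  thus ?thesis unfolding binom_weight_def by (simp add: algebra_simps)
qed (simp add: binom_weight_def)

text \<open>Pascal's rule for expectations: one more trial either succeeds or fails.\<close>
lemma binom_weight_expectation_Suc:
  "(\<Sum>j\<le>Suc L. binom_weight s (Suc L) j * g j)
     = (1-s) * (\<Sum>j\<le>L. binom_weight s L j * g j) + s * (\<Sum>j\<le>L. binom_weight s L j * g (Suc j))"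
proof -
  let ?w = "binom_weight s L"
  have succ: "(\<Sum>j\<le>L. binom_weight s (Suc L) (Suc j) * g (Suc j))
        = s * (\<Sum>j\<le>L. ?w j * g (Suc j)) + (1-s) * (\<Sum>j\<le>L. ?w (Suc j) * g (Suc j))"
  proof -
    have "(\<Sum>j\<le>L. binom_weight s (Suc L) (Suc j) * g (Suc j))
        = (\<Sum>j\<le>L. s * (?w j * g (Suc j)) + (1-s) * (?w (Suc j) * g (Suc j)))"
      by (intro sum.cong refl) (simp add: binom_weight_Suc_Suc algebra_simps)
    thus ?thesis by (simp add: sum.distrib sum_distrib_left)
  qed
  have "(\<Sum>j\<le>L. ?w j * g j) = (\<Sum>j\<le>Suc L. ?w j * g j)"
    by (simp add: binom_weight_def)
  also have "\<dots> = ?w 0 * g 0 + (\<Sum>j\<le>L. ?w (Suc j) * g (Suc j))"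
    by (rule sum.atMost_Suc_shift)
  finally have tail: "(\<Sum>j\<le>L. ?w j * g j) = ?w 0 * g 0 + (\<Sum>j\<le>L. ?w (Suc j) * g (Suc j))" .
  have "(\<Sum>j\<le>Suc L. binom_weight s (Suc L) j * g j)
      = binom_weight s (Suc L) 0 * g 0 + (\<Sum>j\<le>L. binom_weight s (Suc L) (Suc j) * g (Suc j))"
    by (rule sum.atMost_Suc_shift)
  moreover have "binom_weight s (Suc L) 0 = (1-s) * ?w 0" by (simp add: binom_weight_def)
  ultimately show ?thesis unfolding succ tail by (simp add: algebra_simps)
qed

text \<open>Mixing argument: each factor contributes a fair coin with probability \<open>2c\<close>, and
  fair coins smooth the finite difference by the central binomial estimate.\<close>
lemma l1_norm_fin_diff_mixture:
  assumes c: "0 < c" "c < 1/2" and rs: "\<forall>r\<in>set rs. c \<le> r \<and> r \<le> 1 - c"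
  shows "l1_norm (fin_diff * bern_prod rs * bern (1/2) ^ a)
     \<le> (\<Sum>j\<le>length rs. binom_weight (2*c) (length rs) j * (2 / sqrt (real j + real a + 1)))"
  using rs
proof (induction rs arbitrary: a)
  case Nil
  show ?case using l1_norm_fin_diff_half_power[of a] by (simp add: binom_weight_def add.commute)
next
  case (Cons r rs)
  define s where "s = 2*c"
  have s: "0 < s" "s < 1" using c unfolding s_def by auto
  define r' where "r' = (r - c) / (1 - 2*c)"
  have r': "0 \<le> r'" "r' \<le> 1" using Cons.prems c unfolding r'_def by (auto simp: field_simps)
  define W where "W a = fin_diff * bern_prod rs * bern (1/2) ^ a" for a
  define E where "E a = (\<Sum>j\<le>length rs. binom_weight s (length rs) j * (2 / sqrt (real j + real a + 1)))"
    for a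
  have IH: "l1_norm (W a) \<le> E a" for a
    using Cons unfolding W_def E_def s_def by auto
  have "fin_diff * bern_prod (r # rs) * bern (1/2) ^ a = smult (1-s) (bern r' * W a) + smult s (W (Suc a))"
    using bern_mixture[of c r] c Cons.prems unfolding W_def s_def r'_def by (simp add: algebra_simps)
  hence "l1_norm (fin_diff * bern_prod (r # rs) * bern (1/2) ^ a)
      \<le> l1_norm (smult (1-s) (bern r' * W a)) + l1_norm (smult s (W (Suc a)))"
    by (metis l1_norm_add)
  also have "\<dots> = (1-s) * l1_norm (bern r' * W a) + s * l1_norm (W (Suc a))"
    using s by (simp add: l1_norm_smult)
  also have "\<dots> \<le> (1-s) * E a + s * E (Suc a)"
    using IH[of a] IH[of "Suc a"] l1_norm_mult_contraction[of "bern r'" "W a"] l1_norm_bern[OF r'] s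
    by (intro add_mono mult_left_mono) auto
  also have "\<dots> = (\<Sum>j\<le>length (r # rs). binom_weight s (length (r # rs)) j * (2 / sqrt (real j + real a + 1)))"
    unfolding E_def length_Cons binom_weight_expectation_Suc by (simp add: add_ac)
  finally show ?case unfolding s_def .
qed

lemma weighted_square_le:
  fixes w x :: "nat \<Rightarrow> real"
  assumes "\<forall>j\<in>A. w j \<ge> 0" "(\<Sum>j\<in>A. w j) = 1"
  shows "(\<Sum>j\<in>A. w j * x j)^2 \<le> (\<Sum>j\<in>A. w j * (x j)^2)"
proof -
  define m where "m = (\<Sum>j\<in>A. w j * x j)"
  have "0 \<le> (\<Sum>j\<in>A. w j * (x j - m)^2)" using assms by (intro sum_nonneg) auto
  also have "\<dots> = (\<Sum>j\<in>A. w j * (x j)^2) - 2 * m * (\<Sum>j\<in>A. w j * x j) + m^2 * (\<Sum>j\<in>A. w j)"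
    by (simp add: power2_eq_square algebra_simps sum.distrib sum_subtractf sum_distrib_left)
  finally show ?thesis using assms unfolding m_def by (simp add: power2_eq_square)
qed

lemma binom_weight_inverse_moment:
  assumes "0 < s" "s \<le> 1"
  shows "(\<Sum>j\<le>L. binom_weight s L j * (1 / (real j + 1))) \<le> 1 / (s * (L+1))"
proof -
  have shift: "binom_weight s L j * (1 / (real j + 1)) = binom_weight s (Suc L) (Suc j) / (s * (L+1))"
    for j
  proof -
    have "real (Suc L choose Suc j) * (real j + 1) = (real L + 1) * real (L choose j)"
      using arg_cong[OF Suc_times_binomial[of j L], of real] by (simp add: algebra_simps)
    hence choose: "real (Suc L choose Suc j) = (real L + 1) * real (L choose j) / (real j + 1)"
      by (simp add: field_simps del: binomial_Suc_Suc)
    have "binom_weight s (Suc L) (Suc j) = real (Suc L choose Suc j) * s^(Suc j) * (1-s)^(L-j)"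
      unfolding binom_weight_def by (simp del: binomial_Suc_Suc)
    also have "\<dots> = binom_weight s L j * (1 / (real j + 1)) * (s * (L+1))"
      unfolding choose binom_weight_def by (simp add: algebra_simps)
    finally show ?thesis using assms by simp
  qed
  have "(\<Sum>j\<le>L. binom_weight s L j * (1 / (real j + 1)))
      = (\<Sum>j\<le>L. binom_weight s (Suc L) (Suc j)) / (s * (L+1))"
    by (simp only: shift sum_divide_distrib)
  also have "(\<Sum>j\<le>L. binom_weight s (Suc L) (Suc j)) \<le> (\<Sum>j\<le>Suc L. binom_weight s (Suc L) j)"
    using binom_weight_nonneg[of s "Suc L" 0] assms sum.atMost_Suc_shift[of "binom_weight s (Suc L)" L]
    by simp
  also have "\<dots> = 1" by (rule binom_weight_sum)
  finally show ?thesis using assms by (simp add: divide_right_mono)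
qed

definition first_diff_bound :: "real \<Rightarrow> nat \<Rightarrow> real" where
  "first_diff_bound c N = 2 * sqrt (1 / (2*c*(real N + 1)))"

definition second_diff_bound :: "real \<Rightarrow> nat \<Rightarrow> real" where
  "second_diff_bound c N = 4 / (2*c*(real (N div 2) + 1))"

lemma first_diff_bound_antimono:
  "0 < c \<Longrightarrow> N \<le> N' \<Longrightarrow> first_diff_bound c N' \<le> first_diff_bound c N"
  unfolding first_diff_bound_def
  by (intro mult_left_mono real_sqrt_le_mono divide_left_mono mult_left_mono mult_pos_pos) auto

text \<open>First differences: average the central binomial estimate over the binomial number of
  fair coins, using Jensen's inequality and the inverse moment.\<close>
lemma l1_norm_first_diff:
  assumes "0 < c" "c < 1/2" "\<forall>r\<in>set rs. c \<le> r \<and> r \<le> 1 - c"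
  shows "l1_norm (fin_diff * bern_prod rs) \<le> first_diff_bound c (length rs)"
proof -
  let ?L = "length rs" and ?w = "binom_weight (2*c) (length rs)"
  have "(\<Sum>j\<le>?L. ?w j * (1 / sqrt (real j + 1)))^2 \<le> (\<Sum>j\<le>?L. ?w j * (1 / sqrt (real j + 1))^2)"
    using assms by (intro weighted_square_le) (auto simp: binom_weight_nonneg binom_weight_sum)
  also have "\<dots> = (\<Sum>j\<le>?L. ?w j * (1 / (real j + 1)))"
    by (simp add: power_divide)
  also have "\<dots> \<le> 1 / (2*c * (?L+1))"
    using assms by (intro binom_weight_inverse_moment) auto
  finally have "(\<Sum>j\<le>?L. ?w j * (1 / sqrt (real j + 1))) \<le> sqrt (1 / (2*c * (?L+1)))"
    using real_le_rsqrt by blast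
  moreover have "(\<Sum>j\<le>?L. ?w j * (2 / sqrt (real j + real 0 + 1)))
      = 2 * (\<Sum>j\<le>?L. ?w j * (1 / sqrt (real j + 1)))"
    unfolding sum_distrib_left by (intro sum.cong) auto
  ultimately have "l1_norm (fin_diff * bern_prod rs) \<le> 2 * sqrt (1 / (2*c * (?L+1)))"
    using l1_norm_fin_diff_mixture[OF assms, of 0] by simp
  thus ?thesis unfolding first_diff_bound_def by (simp add: add.commute)
qed

text \<open>Second differences: split the factors into two halves and use submultiplicativity.\<close>
lemma l1_norm_second_diff:
  assumes c: "0 < c" "c < 1/2" and rs: "\<forall>r\<in>set rs. c \<le> r \<and> r \<le> 1 - c"
  shows "l1_norm (fin_diff * fin_diff * bern_prod rs) \<le> second_diff_bound c (length rs)"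
proof -
  define n where "n = length rs div 2"
  let ?xs = "take n rs" and ?ys = "drop n rs"
  have lens: "length ?xs = n" "n \<le> length ?ys" unfolding n_def by auto
  have "bern_prod rs = bern_prod ?xs * bern_prod ?ys"
    using bern_prod_append[of ?xs ?ys] by simp
  hence split: "fin_diff * fin_diff * bern_prod rs = (fin_diff * bern_prod ?xs) * (fin_diff * bern_prod ?ys)"
    by (simp add: mult_ac)
  have xs: "l1_norm (fin_diff * bern_prod ?xs) \<le> first_diff_bound c n"
    using l1_norm_first_diff[OF c, of ?xs] rs lens by (auto dest: in_set_takeD)
  have "l1_norm (fin_diff * bern_prod ?ys) \<le> first_diff_bound c (length ?ys)"
    using l1_norm_first_diff[OF c, of ?ys] rs by (auto dest: in_set_dropD)
  also have "\<dots> \<le> first_diff_bound c n" by (rule first_diff_bound_antimono[OF c(1) lens(2)])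
  finally have ys: "l1_norm (fin_diff * bern_prod ?ys) \<le> first_diff_bound c n" .
  have "l1_norm (fin_diff * fin_diff * bern_prod rs)
      \<le> l1_norm (fin_diff * bern_prod ?xs) * l1_norm (fin_diff * bern_prod ?ys)"
    unfolding split by (rule l1_norm_mult)
  also have "\<dots> \<le> first_diff_bound c n * first_diff_bound c n"
    using xs ys l1_norm_nonneg order_trans by (intro mult_mono) blast+
  also have "\<dots> = second_diff_bound c (length rs)"
    using c unfolding first_diff_bound_def second_diff_bound_def n_def by simp
  finally show ?thesis .
qed


section \<open>Rounding the parameters of one bucket\<close>

lemma bern_exchange:
  fixes a p lo h :: real
  assumes h: "h > 0" and a: "lo \<le> a" "a \<le> lo + h" and p: "lo \<le> p" "p \<le> lo + h"
  obtains u v e where "u = lo \<or> u = lo + h" "lo \<le> v" "v \<le> lo + h" "a + p = u + v" "\<bar>e\<bar> \<le> h^2"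
    "bern a * bern p = bern u * bern v + smult e (fin_diff * fin_diff)"
proof -
  define u where "u = (if (a - lo) + (p - lo) \<ge> h then lo + h else lo)"
  define v where "v = a + p - u"
  have u: "u = lo \<or> u = lo + h" "lo \<le> u" "u \<le> lo + h" using h unfolding u_def by auto
  have v: "lo \<le> v" "v \<le> lo + h" using a p unfolding v_def u_def by auto
  have "a*p - u * v = (a - lo)*(p - lo) - (u - lo)*(v - lo)"
    unfolding v_def by (simp add: algebra_simps)
  moreover have "0 \<le> (a - lo)*(p - lo)" "(a - lo)*(p - lo) \<le> h*h"
    "0 \<le> (u - lo)*(v - lo)" "(u - lo)*(v - lo) \<le> h*h"
    using a p u v by (auto intro!: mult_mono)
  ultimately have "\<bar>a*p - u * v\<bar> \<le> h^2" by (simp add: power2_eq_square abs_le_iff)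
  moreover have "bern a * bern p = bern u * bern v + smult (a*p - u * v) (fin_diff * fin_diff)"
    unfolding v_def by (simp add: bern_def fin_diff_def algebra_simps)
  ultimately show ?thesis using that u v unfolding v_def by auto
qed

text \<open>The polynomial identity behind one carry step: after an exchange \<open>(a, p) \<mapsto> (u, v)\<close>,
  the emitted endpoint \<open>u\<close> joins the context and the remainder \<open>v\<close> is carried on.\<close>
lemma carry_step_identity:
  assumes "bern a * bern p = bern u * bern v + smult e (fin_diff * fin_diff)"
  shows "Z * (bern a * bern_prod (p # ps) - bern u * T * B)
    = smult e (fin_diff * fin_diff * Z * bern_prod ps) + Z * bern u * (bern v * bern_prod ps - T * B)"
proof -
  have "bern a * bern_prod (p # ps) = (bern u * bern v + smult e (fin_diff * fin_diff)) * bern_prod ps"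
    by (simp add: assms[symmetric] mult.assoc)
  thus ?thesis by (simp add: algebra_simps)
qed

text \<open>Carrying mass through a bucket: processing the parameters \<open>a # ps\<close> from left to right,
  each exchange emits one endpoint and carries the remainder on.\<close>
lemma bucket_carry:
  fixes lo h \<Phi> :: real and Z :: "real poly"
  assumes h: "h > 0" and range: "\<forall>u\<in>set (a # ps). lo \<le> u \<and> u \<le> lo + h"
    and smooth: "\<forall>us. (\<forall>u\<in>set us. lo \<le> u \<and> u \<le> lo + h) \<longrightarrow> length us + 1 = length ps
         \<longrightarrow> l1_norm (fin_diff * fin_diff * Z * bern_prod us) \<le> \<Phi>"
  shows "\<exists>g b. g \<le> length ps \<and> lo \<le> b \<and> b \<le> lo + h \<and>
     real g * h + (b - lo) = (a - lo) + sum_list (map (\<lambda>x. x - lo) ps) \<and>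
     l1_norm (Z * (bern a * bern_prod ps - bern (lo+h) ^ g * bern lo ^ (length ps - g) * bern b))
       \<le> real (length ps) * h^2 * \<Phi>"
  using range smooth
proof (induction ps arbitrary: a Z)
  case Nil
  show ?case by (rule exI[of _ 0], rule exI[of _ a]) (use Nil.prems in auto)
next
  case (Cons p ps)
  obtain u v e where uv: "u = lo \<or> u = lo + h" "lo \<le> v" "v \<le> lo + h" "a + p = u + v"
    and e: "\<bar>e\<bar> \<le> h^2" and exch: "bern a * bern p = bern u * bern v + smult e (fin_diff * fin_diff)"
    using bern_exchange[OF h, where lo = lo and a = a and p = p] Cons.prems(1) by auto
  have u: "lo \<le> u" "u \<le> lo + h" using uv(1) h by auto
  have "\<forall>us. (\<forall>w\<in>set us. lo \<le> w \<and> w \<le> lo + h) \<longrightarrow> length us + 1 = length ps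
      \<longrightarrow> l1_norm (fin_diff * fin_diff * (Z * bern u) * bern_prod us) \<le> \<Phi>"
  proof (intro allI impI)
    fix us :: "real list"
    assume "\<forall>w\<in>set us. lo \<le> w \<and> w \<le> lo + h" "length us + 1 = length ps"
    thus "l1_norm (fin_diff * fin_diff * (Z * bern u) * bern_prod us) \<le> \<Phi>"
      using Cons.prems(2)[rule_format, of "u # us"] u by (auto simp: mult_ac)
  qed
  then obtain g b where gb: "g \<le> length ps" "lo \<le> b" "b \<le> lo + h"
      "real g * h + (b - lo) = (v - lo) + sum_list (map (\<lambda>x. x - lo) ps)"
    and IH: "l1_norm (Z * bern u * (bern v * bern_prod ps - bern (lo+h) ^ g * bern lo ^ (length ps - g) * bern b))
          \<le> real (length ps) * h^2 * \<Phi>"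
    using Cons.IH[of v "Z * bern u"] Cons.prems(1) uv by auto
  define g' where "g' = (if u = lo + h then Suc g else g)"
  have emitted: "bern (lo+h) ^ g' * bern lo ^ (length (p # ps) - g')
             = bern u * (bern (lo+h) ^ g * bern lo ^ (length ps - g))"
    using uv(1) gb(1) h unfolding g'_def by (auto simp: Suc_diff_le algebra_simps)
  have g'_le: "g' \<le> length (p # ps)" using gb(1) unfolding g'_def by auto
  have sum: "real g' * h + (b - lo) = (a - lo) + sum_list (map (\<lambda>x. x - lo) (p # ps))"
    using uv(1,4) gb(4) h unfolding g'_def by (auto simp: algebra_simps)
  have decomp: "Z * (bern a * bern_prod (p # ps) - bern (lo+h) ^ g' * bern lo ^ (length (p # ps) - g') * bern b)
      = smult e (fin_diff * fin_diff * Z * bern_prod ps)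
        + Z * bern u * (bern v * bern_prod ps - bern (lo+h) ^ g * bern lo ^ (length ps - g) * bern b)"
    unfolding emitted using carry_step_identity[OF exch] by (simp add: mult.assoc)
  have "\<bar>e\<bar> * l1_norm (fin_diff * fin_diff * Z * bern_prod ps) \<le> h^2 * \<Phi>"
    using e Cons.prems(2) Cons.prems(1) by (intro mult_mono) (auto simp: l1_norm_nonneg)
  hence exchange_cost: "l1_norm (smult e (fin_diff * fin_diff * Z * bern_prod ps)) \<le> h^2 * \<Phi>"
    by (simp add: l1_norm_smult)
  have "l1_norm (Z * (bern a * bern_prod (p # ps) - bern (lo+h) ^ g' * bern lo ^ (length (p # ps) - g') * bern b))
      \<le> h^2 * \<Phi> + real (length ps) * h^2 * \<Phi>"
    unfolding decomp using l1_norm_add exchange_cost IH by (rule order_trans[OF _ add_mono])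
  also have "\<dots> = real (length (p # ps)) * h^2 * \<Phi>" by (simp add: algebra_simps)
  finally show ?case
    using gb g'_le sum by blast
qed

text \<open>Moving the final remainder \<open>b\<close> down to the lower endpoint costs \<open>(b - lo)\<close> times a
  first difference, since \<open>bern b - bern lo = (lo - b) (1 - X)\<close>.\<close>
lemma l1_norm_lower_remainder:
  assumes "lo \<le> b"
  shows "l1_norm (Z * (X - Y * bern lo))
    \<le> l1_norm (Z * (X - Y * bern b)) + (b - lo) * l1_norm (fin_diff * Z * Y)"
proof -
  have "bern b = bern lo + smult (lo - b) fin_diff" by (simp add: bern_def fin_diff_def)
  hence "Z * (X - Y * bern lo) = Z * (X - Y * bern b) + smult (lo - b) (fin_diff * Z * Y)"
    by (simp add: algebra_simps)
  hence "l1_norm (Z * (X - Y * bern lo)) \<le> l1_norm (Z * (X - Y * bern b)) + \<bar>lo - b\<bar> * l1_norm (fin_diff * Z * Y)"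
    by (metis l1_norm_add l1_norm_smult)
  thus ?thesis using assms by simp
qed

lemma bucket_rounding_error:
  fixes lo h \<Phi>\<^sub>1 \<Phi>\<^sub>2 :: real and Z :: "real poly"
  assumes h: "h > 0" and "\<Phi>\<^sub>1 \<ge> 0" and nonempty: "ps \<noteq> []"
    and range: "\<forall>u\<in>set ps. lo \<le> u \<and> u \<le> lo + h"
    and smooth2: "\<forall>us. (\<forall>u\<in>set us. lo \<le> u \<and> u \<le> lo + h) \<longrightarrow> length us + 2 = length ps
         \<longrightarrow> l1_norm (fin_diff * fin_diff * Z * bern_prod us) \<le> \<Phi>\<^sub>2"
    and smooth1: "\<forall>us. (\<forall>u\<in>set us. lo \<le> u \<and> u \<le> lo + h) \<longrightarrow> length us + 1 = length ps
         \<longrightarrow> l1_norm (fin_diff * Z * bern_prod us) \<le> \<Phi>\<^sub>1"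
    and m: "m = nat \<lfloor>sum_list (map (\<lambda>x. x - lo) ps) / h\<rfloor>"
  shows "m \<le> length ps \<and>
    l1_norm (Z * (bern_prod ps - bern (lo+h) ^ m * bern lo ^ (length ps - m)))
      \<le> real (length ps - 1) * h^2 * \<Phi>\<^sub>2 + h * \<Phi>\<^sub>1"
proof -
  obtain a rest where ps: "ps = a # rest" using nonempty by (cases ps) auto
  obtain g b where gb: "g \<le> length rest" "lo \<le> b" "b \<le> lo + h"
      "real g * h + (b - lo) = sum_list (map (\<lambda>x. x - lo) ps)"
    and carried: "l1_norm (Z * (bern_prod ps - bern (lo+h) ^ g * bern lo ^ (length rest - g) * bern b))
          \<le> real (length rest) * h^2 * \<Phi>\<^sub>2"
    using bucket_carry[OF h, where lo = lo and a = a and ps = rest and Z = Z and \<Phi> = "\<Phi>\<^sub>2"] range smooth2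
    unfolding ps by auto
  have quotient: "sum_list (map (\<lambda>x. x - lo) ps) / h = real g + (b - lo) / h"
    using gb(4) h by (simp add: field_simps)
  show ?thesis
  proof (cases "b = lo + h")
    case True
    hence "m = Suc g" unfolding m quotient using h by simp
    hence "bern (lo+h) ^ m * bern lo ^ (length ps - m)
        = bern (lo+h) ^ g * bern lo ^ (length rest - g) * bern b"
      using True gb(1) ps by (simp add: mult_ac)
    hence "l1_norm (Z * (bern_prod ps - bern (lo+h) ^ m * bern lo ^ (length ps - m)))
        \<le> real (length rest) * h^2 * \<Phi>\<^sub>2"
      using carried by (simp only:)
    moreover have "0 \<le> h * \<Phi>\<^sub>1" using h assms(2) by simp
    ultimately show ?thesis using \<open>m = Suc g\<close> gb(1) ps by simp
  next
    case False
    hence "\<lfloor>real g + (b - lo) / h\<rfloor> = int g" using gb h by (simp add: floor_eq_iff)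
    hence mg: "m = g" unfolding m quotient by simp
    define us where "us = replicate g (lo+h) @ replicate (length rest - g) lo"
    have us: "\<forall>u\<in>set us. lo \<le> u \<and> u \<le> lo + h" "length us + 1 = length ps"
      using h gb(1) ps unfolding us_def by auto
    have endpoints: "bern (lo+h) ^ m * bern lo ^ (length ps - m) = bern_prod us * bern lo"
      "bern (lo+h) ^ g * bern lo ^ (length rest - g) * bern b = bern_prod us * bern b"
      using mg gb(1) ps unfolding us_def by (simp_all add: bern_prod_append bern_prod_replicate Suc_diff_le)
    have "(b - lo) * l1_norm (fin_diff * Z * bern_prod us) \<le> (b - lo) * \<Phi>\<^sub>1"
      using smooth1 us gb(2) by (intro mult_left_mono) auto
    hence "l1_norm (Z * (bern_prod ps - bern (lo+h) ^ m * bern lo ^ (length ps - m)))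
        \<le> real (length rest) * h^2 * \<Phi>\<^sub>2 + (b - lo) * \<Phi>\<^sub>1"
      using l1_norm_lower_remainder[OF gb(2), of Z "bern_prod ps" "bern_prod us"] carried
      unfolding endpoints by linarith
    also have "(b - lo) * \<Phi>\<^sub>1 \<le> h * \<Phi>\<^sub>1" using gb(3) assms(2) by (intro mult_right_mono) auto
    finally show ?thesis using mg gb(1) ps by simp
  qed
qed


section \<open>Rounding all buckets\<close>

text \<open>Hybrid argument: replace the factors \<open>P j\<close> by \<open>Q j\<close> one index at a time.  Each
  intermediate difference is a mixed product of \<open>P\<close>'s and \<open>Q\<close>'s times \<open>P j - Q j\<close>.\<close>
lemma l1_norm_hybrid_telescope:
  fixes P Q :: "nat \<Rightarrow> real poly"
  assumes "finite J"
    and "\<forall>j\<in>J. \<forall>J1. J1 \<subseteq> J - {j} \<longrightarrow>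
           l1_norm (Z * prod P J1 * prod Q (J - {j} - J1) * (P j - Q j)) \<le> cost j"
  shows "l1_norm (Z * (prod P J - prod Q J)) \<le> sum cost J"
  using assms
proof (induction J arbitrary: Z rule: finite_induct)
  case empty thus ?case by simp
next
  case (insert a J)
  have first: "l1_norm (Z * prod P J * (P a - Q a)) \<le> cost a"
  proof -
    have "insert a J - {a} - J = {}" by auto
    thus ?thesis using insert.prems[rule_format, of a J] insert.hyps by auto
  qed
  have rest: "l1_norm ((Z * Q a) * (prod P J - prod Q J)) \<le> sum cost J"
  proof (rule insert.IH, intro ballI allI impI)
    fix j J1 assume j: "j \<in> J" and J1: "J1 \<subseteq> J - {j}"
    have "insert a J - {j} - J1 = insert a (J - {j} - J1)" using j J1 insert.hyps by auto
    moreover have "J1 \<subseteq> insert a J - {j}" using J1 by auto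
    ultimately show "l1_norm (Z * Q a * prod P J1 * prod Q (J - {j} - J1) * (P j - Q j)) \<le> cost j"
      using insert.prems[rule_format, of j J1] insert.hyps j by (simp add: mult_ac)
  qed
  have "Z * (prod P (insert a J) - prod Q (insert a J))
      = Z * prod P J * (P a - Q a) + (Z * Q a) * (prod P J - prod Q J)"
    using insert.hyps by (simp add: algebra_simps)
  hence "l1_norm (Z * (prod P (insert a J) - prod Q (insert a J)))
       \<le> l1_norm (Z * prod P J * (P a - Q a)) + l1_norm ((Z * Q a) * (prod P J - prod Q J))"
    by (simp add: l1_norm_add)
  also have "\<dots> \<le> cost a + sum cost J" using first rest by simp
  finally show ?case using insert.hyps by simp
qed

lemma set_upt_Suc: "set [1..<Suc L] = {1..L}"
  by auto

lemma bern_prod_map_upt: "bern_prod (map f [1..<Suc L]) = (\<Prod>r\<in>{1..L}. bern (f r))"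
proof -
  have "(\<Prod>r\<in>set [1..<Suc L]. bern (f r)) = prod_list (map (\<lambda>r. bern (f r)) [1..<Suc L])"
    by (rule prod.distinct_set_conv_list) simp
  thus ?thesis unfolding set_upt_Suc bern_prod_def by (simp add: o_def)
qed

lemma sum_list_map_upt: "sum_list (map f [1..<Suc L]) = (\<Sum>r\<in>{1..L}. (f r :: real))"
  unfolding set_upt_Suc[symmetric] by (rule sum.distinct_set_conv_list[symmetric]) simp

lemma prod_threshold:
  fixes X Y :: "'a::comm_monoid_mult"
  assumes "m \<le> L"
  shows "(\<Prod>r\<in>{1..L}. if r \<le> m then X else Y) = X ^ m * Y ^ (L - m)"
proof -
  have "(\<Prod>r\<in>{1..L}. if r \<le> m then X else Y)
      = (\<Prod>r\<in>{1..L} \<inter> {r. r \<le> m}. X) * (\<Prod>r\<in>{1..L} \<inter> - {r. r \<le> m}. Y)"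
    by (rule prod.If_cases) simp
  moreover have "{1..L} \<inter> {r. r \<le> m} = {1..m}" using assms by auto
  moreover have "{1..L} \<inter> - {r. r \<le> m} = {m+1..L}" by auto
  ultimately show ?thesis by simp
qed

locale bucket_rounding =
  fixes J :: "nat set" and I :: "nat \<Rightarrow> nat set" and lo :: "nat \<Rightarrow> real" and h c :: real
    and p q :: "nat \<Rightarrow> real" and enum :: "nat \<Rightarrow> nat \<Rightarrow> nat"
  assumes finite_J: "finite J"
    and finite_I: "\<And>j. j \<in> J \<Longrightarrow> finite (I j)"
    and disjoint: "\<And>j j'. j \<in> J \<Longrightarrow> j' \<in> J \<Longrightarrow> j \<noteq> j' \<Longrightarrow> I j \<inter> I j' = {}"
    and h_pos: "0 < h" and c_pos: "0 < c" and c_less: "c < 1/2"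
    and bucket_inside: "\<And>j x. j \<in> J \<Longrightarrow> lo j \<le> x \<Longrightarrow> x \<le> lo j + h \<Longrightarrow> c \<le> x \<and> x \<le> 1 - c"
    and p_in_bucket: "\<And>j i. j \<in> J \<Longrightarrow> i \<in> I j \<Longrightarrow> lo j \<le> p i \<and> p i \<le> lo j + h"
    and enum_bij: "\<And>j. j \<in> J \<Longrightarrow> bij_betw (enum j) {1..card (I j)} (I j)"
    and q_rounded: "\<And>j r. j \<in> J \<Longrightarrow> r \<in> {1..card (I j)} \<Longrightarrow>
       q (enum j r) = (if r \<le> nat \<lfloor>(\<Sum>i\<in>I j. p i - lo j) / h\<rfloor> then lo j + h else lo j)"
begin

definition rounded_up :: "nat \<Rightarrow> nat" where
  "rounded_up j = nat \<lfloor>(\<Sum>i\<in>I j. p i - lo j) / h\<rfloor>"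

definition total :: nat where
  "total = card (\<Union>(I ` J))"

lemma q_in_bucket:
  assumes "j \<in> J" "i \<in> I j"
  shows "lo j \<le> q i \<and> q i \<le> lo j + h"
proof -
  obtain r where "r \<in> {1..card (I j)}" "enum j r = i"
    using enum_bij[OF assms(1)] assms(2) unfolding bij_betw_def by (metis imageE)
  thus ?thesis using q_rounded[OF assms(1)] h_pos by auto
qed

lemma p_q_smooth: "j \<in> J \<Longrightarrow> i \<in> I j \<Longrightarrow> c \<le> p i \<and> p i \<le> 1 - c \<and> c \<le> q i \<and> q i \<le> 1 - c"
  using bucket_inside p_in_bucket q_in_bucket by blast

lemma sub_family:
  assumes "J' \<subseteq> J"
  shows "finite J'" "\<forall>j\<in>J'. finite (I j)" "\<forall>j\<in>J'. \<forall>j'\<in>J'. j \<noteq> j' \<longrightarrow> I j \<inter> I j' = {}"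
  using assms finite_J finite_I disjoint by (auto intro: finite_subset) blast

lemma p_q_probabilities:
  assumes "i \<in> \<Union>(I ` J)"
  shows "0 \<le> p i \<and> p i \<le> 1 \<and> 0 \<le> q i \<and> q i \<le> 1"
proof -
  obtain j where "j \<in> J" "i \<in> I j" using assms by blast
  from p_q_smooth[OF this] c_pos c_less show ?thesis by linarith
qed

lemma prod_over_buckets:
  "J' \<subseteq> J \<Longrightarrow> (\<Prod>i\<in>\<Union>(I ` J'). f i) = (\<Prod>j\<in>J'. \<Prod>i\<in>I j. f i)"
  using sub_family by (rule prod.UNION_disjoint)

lemma card_over_buckets: "J' \<subseteq> J \<Longrightarrow> card (\<Union>(I ` J')) = (\<Sum>j\<in>J'. card (I j))"
  using sub_family by (rule card_UN_disjoint)

lemma total_split: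
  assumes j: "j \<in> J" and J1: "J1 \<subseteq> J - {j}"
  shows "total = card (I j) + card (\<Union>(I ` J1)) + card (\<Union>(I ` (J - {j} - J1)))"
proof -
  define J2 where "J2 = J - {j} - J1"
  have J: "J = insert j (J1 \<union> J2)" "j \<notin> J1 \<union> J2" "J1 \<inter> J2 = {}"
    using j J1 unfolding J2_def by auto
  have sub: "J1 \<subseteq> J" "J2 \<subseteq> J" using J(1) by auto
  have fin: "finite J1" "finite J2" using sub_family[OF sub(1)] sub_family[OF sub(2)] by simp_all
  have "total = (\<Sum>b\<in>insert j (J1 \<union> J2). card (I b))"
    unfolding total_def card_over_buckets[OF order_refl] using J(1) by simp
  also have "\<dots> = card (I j) + (\<Sum>b\<in>J1 \<union> J2. card (I b))"
    using J(2) fin by (simp add: sum.insert)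
  also have "(\<Sum>b\<in>J1 \<union> J2. card (I b)) = (\<Sum>b\<in>J1. card (I b)) + (\<Sum>b\<in>J2. card (I b))"
    using fin J(3) by (rule sum.union_disjoint)
  finally show ?thesis
    using card_over_buckets[OF sub(1)] card_over_buckets[OF sub(2)] unfolding J2_def by simp
qed

lemma hybrid_context:
  assumes j: "j \<in> J" and J1: "J1 \<subseteq> J - {j}"
  obtains rs where
    "(\<Prod>b\<in>J1. \<Prod>i\<in>I b. bern (p i)) * (\<Prod>b\<in>J - {j} - J1. \<Prod>i\<in>I b. bern (q i)) = bern_prod rs"
    "\<forall>r\<in>set rs. c \<le> r \<and> r \<le> 1 - c" "length rs + card (I j) = total"
proof -
  define J2 where "J2 = J - {j} - J1"
  have sub: "J1 \<subseteq> J" "J2 \<subseteq> J" using J1 unfolding J2_def by auto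
  have fin: "finite (\<Union>(I ` J1))" "finite (\<Union>(I ` J2))"
    using sub_family[OF sub(1)] sub_family[OF sub(2)] by auto
  obtain rs1 where rs1: "(\<Prod>i\<in>\<Union>(I ` J1). bern (p i)) = bern_prod rs1"
      "set rs1 = p ` \<Union>(I ` J1)" "length rs1 = card (\<Union>(I ` J1))"
    by (rule prod_bern_as_list[OF fin(1)])
  obtain rs2 where rs2: "(\<Prod>i\<in>\<Union>(I ` J2). bern (q i)) = bern_prod rs2"
      "set rs2 = q ` \<Union>(I ` J2)" "length rs2 = card (\<Union>(I ` J2))"
    by (rule prod_bern_as_list[OF fin(2)])
  show ?thesis
  proof
    show "(\<Prod>b\<in>J1. \<Prod>i\<in>I b. bern (p i)) * (\<Prod>b\<in>J - {j} - J1. \<Prod>i\<in>I b. bern (q i))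
        = bern_prod (rs1 @ rs2)"
    proof -
      have "(\<Prod>b\<in>J1. \<Prod>i\<in>I b. bern (p i)) * (\<Prod>b\<in>J2. \<Prod>i\<in>I b. bern (q i))
          = (\<Prod>i\<in>\<Union>(I ` J1). bern (p i)) * (\<Prod>i\<in>\<Union>(I ` J2). bern (q i))"
        by (simp only: prod_over_buckets[OF sub(1)] prod_over_buckets[OF sub(2)])
      thus ?thesis using rs1(1) rs2(1) unfolding J2_def by (simp add: bern_prod_append)
    qed
    show "\<forall>r\<in>set (rs1 @ rs2). c \<le> r \<and> r \<le> 1 - c"
    proof
      fix r assume "r \<in> set (rs1 @ rs2)"
      then obtain b i where "b \<in> J" "i \<in> I b" "r = p i \<or> r = q i"
        using rs1(2) rs2(2) sub by auto
      thus "c \<le> r \<and> r \<le> 1 - c" using p_q_smooth[of b i] by auto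
    qed
    show "length (rs1 @ rs2) + card (I j) = total"
      using rs1(3) rs2(3) total_split[OF j J1] unfolding J2_def by simp
  qed
qed

lemma bucket_as_list:
  assumes j: "j \<in> J"
  defines "ps \<equiv> map (\<lambda>r. p (enum j r)) [1..<Suc (card (I j))]"
  shows "(\<Prod>i\<in>I j. bern (p i)) = bern_prod ps"
    and "sum_list (map (\<lambda>x. x - lo j) ps) = (\<Sum>i\<in>I j. p i - lo j)"
    and "\<forall>u\<in>set ps. lo j \<le> u \<and> u \<le> lo j + h" and "length ps = card (I j)"
    and "rounded_up j \<le> card (I j) \<Longrightarrow>
      (\<Prod>i\<in>I j. bern (q i)) = bern (lo j + h) ^ rounded_up j * bern (lo j) ^ (card (I j) - rounded_up j)"
proof -
  note bij = enum_bij[OF j]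
  show "(\<Prod>i\<in>I j. bern (p i)) = bern_prod ps"
    unfolding ps_def bern_prod_map_upt by (rule prod.reindex_bij_betw[OF bij, symmetric])
  show "sum_list (map (\<lambda>x. x - lo j) ps) = (\<Sum>i\<in>I j. p i - lo j)"
    unfolding ps_def map_map o_def sum_list_map_upt by (rule sum.reindex_bij_betw[OF bij])
  have "enum j r \<in> I j" if "r \<in> {1..card (I j)}" for r
    using bij that by (auto simp: bij_betw_def)
  thus "\<forall>u\<in>set ps. lo j \<le> u \<and> u \<le> lo j + h" "length ps = card (I j)"
    unfolding ps_def using p_in_bucket[OF j] by force+
  assume "rounded_up j \<le> card (I j)"
  have "(\<Prod>i\<in>I j. bern (q i)) = (\<Prod>r\<in>{1..card (I j)}. bern (q (enum j r)))"
    by (rule prod.reindex_bij_betw[OF bij, symmetric])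
  also have "\<dots> = (\<Prod>r\<in>{1..card (I j)}. if r \<le> rounded_up j then bern (lo j + h) else bern (lo j))"
    using q_rounded[OF j] unfolding rounded_up_def by (intro prod.cong) auto
  finally show "(\<Prod>i\<in>I j. bern (q i)) = bern (lo j + h) ^ rounded_up j * bern (lo j) ^ (card (I j) - rounded_up j)"
    using prod_threshold[OF \<open>rounded_up j \<le> card (I j)\<close>] by simp
qed

lemma hybrid_bucket_cost:
  assumes j: "j \<in> J" and J1: "J1 \<subseteq> J - {j}" and nonempty: "I j \<noteq> {}"
  shows "l1_norm ((\<Prod>b\<in>J1. \<Prod>i\<in>I b. bern (p i)) * (\<Prod>b\<in>J - {j} - J1. \<Prod>i\<in>I b. bern (q i))
            * ((\<Prod>i\<in>I j. bern (p i)) - (\<Prod>i\<in>I j. bern (q i))))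
     \<le> real (card (I j) - 1) * h^2 * second_diff_bound c (total - 2) + h * first_diff_bound c (total - 1)"
proof -
  obtain rs where hybrid: "(\<Prod>b\<in>J1. \<Prod>i\<in>I b. bern (p i)) * (\<Prod>b\<in>J - {j} - J1. \<Prod>i\<in>I b. bern (q i))
      = bern_prod rs" and rs: "\<forall>r\<in>set rs. c \<le> r \<and> r \<le> 1 - c" "length rs + card (I j) = total"
    by (rule hybrid_context[OF j J1])
  define ps where "ps = map (\<lambda>r. p (enum j r)) [1..<Suc (card (I j))]"
  note bucket = bucket_as_list[OF j, folded ps_def]
  have smooth: "\<forall>r\<in>set (rs @ us). c \<le> r \<and> r \<le> 1 - c"
    if "\<forall>u\<in>set us. lo j \<le> u \<and> u \<le> lo j + h" for us
    using rs(1) that bucket_inside[OF j] by auto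
  have "rounded_up j \<le> length ps \<and>
      l1_norm (bern_prod rs * (bern_prod ps - bern (lo j + h) ^ rounded_up j * bern (lo j) ^ (length ps - rounded_up j)))
        \<le> real (length ps - 1) * h^2 * second_diff_bound c (total - 2) + h * first_diff_bound c (total - 1)"
  proof (rule bucket_rounding_error[OF h_pos])
    show "0 \<le> first_diff_bound c (total - 1)" unfolding first_diff_bound_def using c_pos by simp
    show "ps \<noteq> []" "\<forall>u\<in>set ps. lo j \<le> u \<and> u \<le> lo j + h"
      using bucket(3,4) nonempty finite_I[OF j] by auto
    show "rounded_up j = nat \<lfloor>sum_list (map (\<lambda>x. x - lo j) ps) / h\<rfloor>"
      unfolding rounded_up_def bucket(2) ..
    show "\<forall>us. (\<forall>u\<in>set us. lo j \<le> u \<and> u \<le> lo j + h) \<longrightarrow> length us + 2 = length ps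
        \<longrightarrow> l1_norm (fin_diff * fin_diff * bern_prod rs * bern_prod us) \<le> second_diff_bound c (total - 2)"
    proof (intro allI impI)
      fix us assume us: "\<forall>u\<in>set us. lo j \<le> u \<and> u \<le> lo j + h" "length us + 2 = length ps"
      hence "length (rs @ us) = total - 2" using rs(2) bucket(4) by simp
      thus "l1_norm (fin_diff * fin_diff * bern_prod rs * bern_prod us) \<le> second_diff_bound c (total - 2)"
        using l1_norm_second_diff[OF c_pos c_less smooth[OF us(1)]] by (simp add: bern_prod_append mult.assoc)
    qed
    show "\<forall>us. (\<forall>u\<in>set us. lo j \<le> u \<and> u \<le> lo j + h) \<longrightarrow> length us + 1 = length ps
        \<longrightarrow> l1_norm (fin_diff * bern_prod rs * bern_prod us) \<le> first_diff_bound c (total - 1)"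
    proof (intro allI impI)
      fix us assume us: "\<forall>u\<in>set us. lo j \<le> u \<and> u \<le> lo j + h" "length us + 1 = length ps"
      hence "length (rs @ us) = total - 1" using rs(2) bucket(4) by simp
      thus "l1_norm (fin_diff * bern_prod rs * bern_prod us) \<le> first_diff_bound c (total - 1)"
        using l1_norm_first_diff[OF c_pos c_less smooth[OF us(1)]] by (simp add: bern_prod_append mult.assoc)
    qed
  qed
  thus ?thesis unfolding hybrid using bucket(1,4,5) by (simp add: mult.assoc)
qed

text \<open>Each nonempty bucket contains at least one index.\<close>
lemma card_nonempty_buckets: "card {j\<in>J. I j \<noteq> {}} \<le> min total (card J)"
proof -
  have "card {j\<in>J. I j \<noteq> {}} = (\<Sum>j\<in>{j\<in>J. I j \<noteq> {}}. 1)" by simp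
  also have "\<dots> \<le> (\<Sum>j\<in>{j\<in>J. I j \<noteq> {}}. card (I j))"
    using finite_I by (intro sum_mono) (auto simp: Suc_le_eq card_gt_0_iff)
  also have "\<dots> \<le> (\<Sum>j\<in>J. card (I j))" using finite_J by (intro sum_mono2) auto
  finally have "card {j\<in>J. I j \<noteq> {}} \<le> total" unfolding total_def card_over_buckets[OF order_refl] .
  moreover have "card {j\<in>J. I j \<noteq> {}} \<le> card J" using finite_J by (intro card_mono) auto
  ultimately show ?thesis by simp
qed

lemma sum_bucket_costs:
  assumes "0 \<le> \<Phi>\<^sub>2"
  shows "(\<Sum>j\<in>J. if I j = {} then 0 else real (card (I j) - 1) * h^2 * \<Phi>\<^sub>2 + h * \<Phi>\<^sub>1)
    \<le> h^2 * \<Phi>\<^sub>2 * real total + h * \<Phi>\<^sub>1 * real (card {j\<in>J. I j \<noteq> {}})"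
proof -
  have "(\<Sum>j\<in>J. if I j = {} then 0 else real (card (I j) - 1) * h^2 * \<Phi>\<^sub>2 + h * \<Phi>\<^sub>1)
      \<le> (\<Sum>j\<in>J. h^2 * \<Phi>\<^sub>2 * real (card (I j)) + (if I j \<noteq> {} then h * \<Phi>\<^sub>1 else 0))"
  proof (intro sum_mono)
    fix j
    have "real (card (I j) - 1) * (h^2 * \<Phi>\<^sub>2) \<le> real (card (I j)) * (h^2 * \<Phi>\<^sub>2)"
      using assms by (intro mult_right_mono) auto
    thus "(if I j = {} then 0 else real (card (I j) - 1) * h^2 * \<Phi>\<^sub>2 + h * \<Phi>\<^sub>1)
        \<le> h^2 * \<Phi>\<^sub>2 * real (card (I j)) + (if I j \<noteq> {} then h * \<Phi>\<^sub>1 else 0)"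
      using assms by (simp add: mult_ac)
  qed
  also have "\<dots> = h^2 * \<Phi>\<^sub>2 * real total + h * \<Phi>\<^sub>1 * real (card {j\<in>J. I j \<noteq> {}})"
    using sum.inter_filter[OF finite_J, of "\<lambda>_. h * \<Phi>\<^sub>1" "\<lambda>j. I j \<noteq> {}"]
    by (simp add: sum.distrib sum_distrib_left total_def card_over_buckets mult.commute)
  finally show ?thesis .
qed

theorem tv_dist_bucket_rounding:
  "tv_dist (sum_indicators_law (\<Union>(I ` J)) p) (sum_indicators_law (\<Union>(I ` J)) q)
     \<le> h^2 * second_diff_bound c (total - 2) * real total
       + h * first_diff_bound c (total - 1) * real (card {j\<in>J. I j \<noteq> {}})"
proof -
  define \<Phi>\<^sub>1 where "\<Phi>\<^sub>1 = first_diff_bound c (total - 1)"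
  define \<Phi>\<^sub>2 where "\<Phi>\<^sub>2 = second_diff_bound c (total - 2)"
  define cost where
    "cost j = (if I j = {} then 0 else real (card (I j) - 1) * h^2 * \<Phi>\<^sub>2 + h * \<Phi>\<^sub>1)" for j
  have "tv_dist (sum_indicators_law (\<Union>(I ` J)) p) (sum_indicators_law (\<Union>(I ` J)) q)
      \<le> l1_norm ((\<Prod>i\<in>\<Union>(I ` J). bern (p i)) - (\<Prod>i\<in>\<Union>(I ` J). bern (q i)))"
    using finite_J finite_I p_q_probabilities by (intro tv_dist_le_l1_norm) auto
  also have "\<dots> = l1_norm (1 * ((\<Prod>j\<in>J. \<Prod>i\<in>I j. bern (p i)) - (\<Prod>j\<in>J. \<Prod>i\<in>I j. bern (q i))))"
    by (simp add: prod_over_buckets)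
  also have "\<dots> \<le> sum cost J"
  proof (intro l1_norm_hybrid_telescope finite_J ballI allI impI)
    fix j J1 assume "j \<in> J" "J1 \<subseteq> J - {j}"
    thus "l1_norm (1 * (\<Prod>b\<in>J1. \<Prod>i\<in>I b. bern (p i)) * (\<Prod>b\<in>J - {j} - J1. \<Prod>i\<in>I b. bern (q i))
        * ((\<Prod>i\<in>I j. bern (p i)) - (\<Prod>i\<in>I j. bern (q i)))) \<le> cost j"
      using hybrid_bucket_cost unfolding cost_def \<Phi>\<^sub>1_def \<Phi>\<^sub>2_def by simp
  qed
  also have "\<dots> \<le> h^2 * \<Phi>\<^sub>2 * real total + h * \<Phi>\<^sub>1 * real (card {j\<in>J. I j \<noteq> {}})"
    unfolding cost_def using c_pos by (intro sum_bucket_costs) (simp add: \<Phi>\<^sub>2_def second_diff_bound_def)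
  finally show ?thesis unfolding \<Phi>\<^sub>1_def \<Phi>\<^sub>2_def .
qed

end


section \<open>The medium-expectation buckets\<close>

lemma bucket_bounds:
  assumes k: "k > 0" and j: "j \<le> k div 2" and x: "x \<in> bucket k j"
  shows "real j / real k \<le> x \<and> x \<le> real j / real k + 1 / real k"
proof (cases "j < k div 2")
  case True
  thus ?thesis using x unfolding bucket_def by (auto simp: add_divide_distrib)
next
  case False
  hence jj: "j = k div 2" using j by simp
  have "real k \<le> 2 * real j + 2" unfolding jj by linarith
  hence "1/2 \<le> real j / real k + 1 / real k" using k by (simp add: field_simps)
  moreover have "real j / real k \<le> x \<and> x \<le> 1/2" using x False jj unfolding bucket_def by auto
  ultimately show ?thesis by linarith
qed

lemma bucket_disjoint:
  assumes k: "k > 0" and j: "j \<le> k div 2" "j' \<le> k div 2" "j \<noteq> j'"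
  shows "bucket k j \<inter> bucket k j' = {}"
proof -
  have disj: "bucket k a \<inter> bucket k b = {}" if "a < b" "b \<le> k div 2" for a b
  proof -
    have "\<forall>x\<in>bucket k a. x < real (a+1) / real k" using that unfolding bucket_def by auto
    moreover have "\<forall>x\<in>bucket k b. real b / real k \<le> x"
      using that unfolding bucket_def by (auto split: if_splits)
    moreover have "real (a+1) / real k \<le> real b / real k" using that k by (simp add: divide_right_mono)
    ultimately show ?thesis by fastforce
  qed
  show ?thesis using disj[of j j'] disj[of j' j] j by (cases "j < j'") auto
qed

lemma medium_bucket_inside:
  fixes k :: nat and \<alpha> x :: real
  assumes k4: "real k \<ge> 4" and ka: "real k powr \<alpha> \<ge> 2" and kb: "real k powr (\<alpha> - 1) \<le> 1/2"
    and j: "j \<in> medium_range \<alpha> k"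
    and x: "real j / real k \<le> x" "x \<le> real j / real k + 1 / real k"
  shows "real k powr (\<alpha>-1) / 2 \<le> x \<and> x \<le> 1 - real k powr (\<alpha>-1) / 2"
proof
  have kp: "real k > 0" using k4 by simp
  have j_bounds: "nat \<lfloor>real k powr \<alpha>\<rfloor> \<le> j" "j \<le> k div 2" using j unfolding medium_range_def by auto
  have "real k powr \<alpha> - 1 \<le> real j" using j_bounds(1) ka by linarith
  hence "real k powr \<alpha> / 2 / real k \<le> real j / real k"
    using ka kp by (intro divide_right_mono) auto
  moreover have "real k powr \<alpha> / real k = real k powr (\<alpha> - 1)"
    using kp powr_diff[of "real k" \<alpha> 1] by simp
  ultimately show "real k powr (\<alpha>-1) / 2 \<le> x" using x by (simp add: field_simps)
  have "real j / real k \<le> 1/2" using j_bounds(2) kp by (simp add: divide_simps)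
  moreover have "1 / real k \<le> 1/4" using k4 by (simp add: divide_simps)
  ultimately show "x \<le> 1 - real k powr (\<alpha>-1) / 2" using x kb by linarith
qed

lemma medium_threshold:
  assumes kp: "k > 0" and p_ge: "\<forall>i\<in>Istar n k p j. real j / real k \<le> p i"
  shows "(int r \<le> m_j n k p j) \<longleftrightarrow>
      r \<le> nat \<lfloor>(\<Sum>i\<in>Istar n k p j. p i - real j / real k) / (1 / real k)\<rfloor>"
proof -
  have "0 \<le> (\<Sum>i\<in>Istar n k p j. p i - real j / real k)"
    using p_ge by (intro sum_nonneg) auto
  hence "0 \<le> \<lfloor>(\<Sum>i\<in>Istar n k p j. p i - real j / real k) / (1 / real k)\<rfloor>"
    using kp by simp
  moreover have "m_j n k p j = \<lfloor>(\<Sum>i\<in>Istar n k p j. p i - real j / real k) / (1 / real k)\<rfloor>"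
    unfolding m_j_def S_j_def by (simp add: mult.commute)
  ultimately show ?thesis by (simp add: le_nat_iff)
qed

lemma medium_rounding_bucket_rounding:
  fixes k n :: nat and \<alpha> :: real
  assumes k4: "real k \<ge> 4" and ka: "real k powr \<alpha> \<ge> 2" and kb: "real k powr (\<alpha> - 1) \<le> 1/2"
    and rounding: "medium_rounding \<alpha> n k p enum q"
  shows "bucket_rounding (medium_range \<alpha> k) (Istar n k p) (\<lambda>j. real j / real k) (1 / real k)
           (real k powr (\<alpha>-1) / 2) p q enum"
proof -
  have kp: "k > 0" using k4 by simp
  have in_range: "j \<le> k div 2" if "j \<in> medium_range \<alpha> k" for j
    using that unfolding medium_range_def by auto
  have p_in: "real j / real k \<le> p i \<and> p i \<le> real j / real k + 1 / real k"
    if "j \<in> medium_range \<alpha> k" "i \<in> Istar n k p j" for i j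
    using that bucket_bounds[OF kp in_range] unfolding Istar_def by blast
  show ?thesis
  proof
    show "finite (medium_range \<alpha> k)" unfolding medium_range_def by simp
    show "finite (Istar n k p j)" for j unfolding Istar_def by simp
    show "Istar n k p j \<inter> Istar n k p j' = {}"
      if "j \<in> medium_range \<alpha> k" "j' \<in> medium_range \<alpha> k" "j \<noteq> j'" for j j'
      using bucket_disjoint[OF kp in_range[OF that(1)] in_range[OF that(2)] that(3)]
      unfolding Istar_def by auto
    show "0 < 1 / real k" "0 < real k powr (\<alpha> - 1) / 2" "real k powr (\<alpha> - 1) / 2 < 1/2"
      using kp kb by auto
    show "real k powr (\<alpha> - 1) / 2 \<le> x \<and> x \<le> 1 - real k powr (\<alpha> - 1) / 2"
      if "j \<in> medium_range \<alpha> k" "real j / real k \<le> x" "x \<le> real j / real k + 1 / real k" for j x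
      using medium_bucket_inside[OF k4 ka kb that] .
    show "real j / real k \<le> p i \<and> p i \<le> real j / real k + 1 / real k"
      if "j \<in> medium_range \<alpha> k" "i \<in> Istar n k p j" for j i
      using p_in[OF that] .
    show "bij_betw (enum j) {1..card (Istar n k p j)} (Istar n k p j)"
      if "j \<in> medium_range \<alpha> k" for j
      using rounding that unfolding medium_rounding_def by blast
    show "q (enum j r) = (if r \<le> nat \<lfloor>(\<Sum>i\<in>Istar n k p j. p i - real j / real k) / (1 / real k)\<rfloor>
        then real j / real k + 1 / real k else real j / real k)"
      if "j \<in> medium_range \<alpha> k" "r \<in> {1..card (Istar n k p j)}" for j r
      using rounding that medium_threshold[OF kp, of n p j r] p_in[OF that(1)] unfolding medium_rounding_def
      by (auto simp: add_divide_distrib)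
  qed
qed

section \<open>Numerical estimates\<close>

lemma exchange_term_estimate:
  fixes k \<alpha> :: real and M :: nat
  assumes k: "k \<ge> 1"
  shows "(1/k)^2 * second_diff_bound (k powr (\<alpha>-1) / 2) (M - 2) * real M \<le> 12 * k powr (-\<alpha>)"
proof -
  define s where "s = k powr (\<alpha>-1)"
  define D where "D = real ((M - 2) div 2) + 1"
  have s: "s > 0" unfolding s_def using k by simp
  have D: "D > 0" unfolding D_def by simp
  have "M \<le> 3 * ((M - 2) div 2 + 1)" by presburger
  hence "real M \<le> 3 * D" unfolding D_def using of_nat_mono by fastforce
  hence "4 * real M / D \<le> 12" using D by (simp add: divide_le_eq)
  hence "4 * real M / D / s \<le> 12 / s" using s by (intro divide_right_mono) auto
  moreover have "second_diff_bound (s / 2) (M - 2) * real M = 4 * real M / D / s"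
    unfolding second_diff_bound_def D_def by (simp add: divide_divide_eq_left mult.commute)
  ultimately have "(1/k)^2 * (second_diff_bound (s / 2) (M - 2) * real M) \<le> (1/k)^2 * (12 / s)"
    by (intro mult_left_mono) auto
  also have "(1/k)^2 * (12 / s) = 12 * k powr (-1 - \<alpha>)"
  proof -
    have "(1/k)^2 = k powr (-2)" using k by (simp add: powr_minus powr_realpow divide_inverse power_inverse)
    moreover have "1 / s = k powr (1 - \<alpha>)"
      unfolding s_def using k by (simp add: powr_minus_divide[symmetric] powr_minus)
    moreover have "k powr (-2) * k powr (1 - \<alpha>) = k powr (-1 - \<alpha>)"
      using k by (simp add: powr_add[symmetric])
    ultimately show ?thesis by (simp add: divide_inverse)
  qed
  also have "\<dots> \<le> 12 * k powr (-\<alpha>)" using k by (intro mult_left_mono powr_mono) auto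
  finally show ?thesis unfolding s_def by (simp add: mult.assoc)
qed

lemma remainder_term_estimate:
  fixes k \<alpha> :: real and M K :: nat
  assumes k: "k \<ge> 1" and K: "K \<le> M" "real K \<le> k"
  shows "(1/k) * first_diff_bound (k powr (\<alpha>-1) / 2) (M - 1) * real K \<le> 2 * k powr (-\<alpha>/2)"
proof (cases "K = 0")
  case False
  define s where "s = k powr (\<alpha>-1)"
  have s: "s > 0" unfolding s_def using k by simp
  have M: "real (M - 1) + 1 = real M" "real M > 0" using K False by auto
  have "real K^2 \<le> k * real M" unfolding power2_eq_square using K M by (intro mult_mono) auto
  hence "real K^2 / (s * real M) \<le> k / s" using s M by (simp add: divide_simps)
  hence "sqrt (real K^2 / (s * real M)) \<le> sqrt (k / s)" by (rule real_sqrt_le_mono)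
  moreover have "sqrt (1 / (s * real M)) * real K = sqrt (real K^2 / (s * real M))"
    by (simp add: real_sqrt_divide real_sqrt_mult)
  ultimately have "sqrt (1 / (s * real M)) * real K \<le> sqrt (k / s)" by simp
  also have "k / s = k powr (1 - \<alpha>/2) * k powr (1 - \<alpha>/2)"
    unfolding s_def using k by (simp add: powr_add[symmetric] powr_diff)
  also have "sqrt \<dots> = k powr (1 - \<alpha>/2)" by simp
  finally have "sqrt (1 / (s * real M)) * real K \<le> k powr (1 - \<alpha>/2)" .
  hence "(2/k) * (sqrt (1 / (s * real M)) * real K) \<le> (2/k) * k powr (1 - \<alpha>/2)"
    using k by (intro mult_left_mono) auto
  also have "(2/k) * k powr (1 - \<alpha>/2) = 2 * k powr (-\<alpha>/2)"
    using k powr_diff[of k "1 - \<alpha>/2" 1] by (simp add: field_simps)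
  finally show ?thesis
    unfolding first_diff_bound_def s_def M(1) by (simp add: mult_ac)
qed simp

lemma powr_ge_2:
  fixes a :: real and k :: nat
  assumes a: "0 < a" and k: "real k \<ge> 2 powr (1/a)"
  shows "real k powr a \<ge> 2"
proof -
  have "(2 powr (1/a)) powr a \<le> real k powr a" using k a by (intro powr_mono2) auto
  thus ?thesis using a by (simp add: powr_powr)
qed

lemma large_k:
  fixes \<alpha> :: real and k :: nat
  assumes "0 < \<alpha>" "\<alpha> < 1" and k: "nat \<lceil>2 powr (1/\<alpha>)\<rceil> + nat \<lceil>2 powr (1/(1-\<alpha>))\<rceil> + 4 \<le> k"
  shows "real k \<ge> 4" "real k powr \<alpha> \<ge> 2" "real k powr (\<alpha> - 1) \<le> 1/2"
proof -
  show "real k \<ge> 4" using k by linarith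
  show "real k powr \<alpha> \<ge> 2" using k assms(1) by (intro powr_ge_2) linarith+
  have "real k powr (1 - \<alpha>) \<ge> 2" using k assms(2) by (intro powr_ge_2) linarith+
  moreover have "real k powr (\<alpha> - 1) = inverse (real k powr (1 - \<alpha>))"
    by (metis minus_diff_eq powr_minus)
  ultimately show "real k powr (\<alpha> - 1) \<le> 1/2"
    using le_imp_inverse_le[of 2 "real k powr (1 - \<alpha>)"] by simp
qed

lemma medium_rounding_tv_bound:
  fixes k n :: nat and \<alpha> :: real
  assumes k4: "real k \<ge> 4" and ka: "real k powr \<alpha> \<ge> 2" and kb: "real k powr (\<alpha> - 1) \<le> 1/2"
    and rounding: "medium_rounding \<alpha> n k p enum q"
  shows "tv_dist (sum_indicators_law (M1star \<alpha> n k p) p) (sum_indicators_law (M1star \<alpha> n k p) q)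
           \<le> 12 * real k powr (-\<alpha>) + 2 * real k powr (-\<alpha>/2)"
proof -
  interpret bucket_rounding "medium_range \<alpha> k" "Istar n k p" "\<lambda>j. real j / real k" "1 / real k"
      "real k powr (\<alpha>-1) / 2" p q enum
    by (rule medium_rounding_bucket_rounding[OF k4 ka kb rounding])
  define K where "K = card {j\<in>medium_range \<alpha> k. Istar n k p j \<noteq> {}}"
  have "card (medium_range \<alpha> k) \<le> k" unfolding medium_range_def using k4 by simp
  hence K: "K \<le> total" "real K \<le> real k" using card_nonempty_buckets unfolding K_def by auto
  have "M1star \<alpha> n k p = \<Union>(Istar n k p ` medium_range \<alpha> k)" unfolding M1star_def ..
  hence "tv_dist (sum_indicators_law (M1star \<alpha> n k p) p) (sum_indicators_law (M1star \<alpha> n k p) q)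
      \<le> (1 / real k)^2 * second_diff_bound (real k powr (\<alpha>-1) / 2) (total - 2) * real total
        + (1 / real k) * first_diff_bound (real k powr (\<alpha>-1) / 2) (total - 1) * real K"
    using tv_dist_bucket_rounding unfolding K_def by simp
  also have "\<dots> \<le> 12 * real k powr (-\<alpha>) + 2 * real k powr (-\<alpha>/2)"
    using exchange_term_estimate remainder_term_estimate K k4 by (intro add_mono) auto
  finally show ?thesis .
qed

theorem mainTheorem11:
  fixes \<alpha> \<beta> :: real
  assumes "0 < \<alpha>" "\<alpha> < 1" "0 < \<beta>" "\<beta> < 1" "\<alpha> + \<beta> > 1"
  shows "\<exists>C::real. \<exists>K::nat. \<forall>k\<ge>K. \<forall>(n::nat) (p::nat \<Rightarrow> real) enum (q::nat \<Rightarrow> real).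
           (\<forall>i\<in>{1..n}. 0 \<le> p i \<and> p i \<le> 1) \<longrightarrow>
           medium_rounding \<alpha> n k p enum q \<longrightarrow>
           tv_dist (sum_indicators_law (M1star \<alpha> n k p) p)
                   (sum_indicators_law (M1star \<alpha> n k p) q)
             \<le> C * (real k powr (-(\<alpha> + \<beta> - 1) / 2) + real k powr (-\<alpha>)
                    + real k powr (-1/2) + real k powr (-(1 - \<beta>)))"
proof -
  let ?K = "nat \<lceil>2 powr (1/\<alpha>)\<rceil> + nat \<lceil>2 powr (1/(1-\<alpha>))\<rceil> + 4"
  have "tv_dist (sum_indicators_law (M1star \<alpha> n k p) p) (sum_indicators_law (M1star \<alpha> n k p) q)
      \<le> 12 * (real k powr (-(\<alpha> + \<beta> - 1) / 2) + real k powr (-\<alpha>)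
              + real k powr (-1/2) + real k powr (-(1 - \<beta>)))"
    if k: "?K \<le> k" and rounding: "medium_rounding \<alpha> n k p enum q" for k n p enum q
  proof -
    note large = large_k[OF assms(1,2) k]
    have "real k powr (-\<alpha>/2) \<le> real k powr (-(\<alpha> + \<beta> - 1) / 2)"
      using large(1) assms(4) by (intro powr_mono) auto
    moreover have "0 \<le> real k powr (-(\<alpha> + \<beta> - 1) / 2)" "0 \<le> real k powr (-1/2)"
      "0 \<le> real k powr (-(1 - \<beta>))" by simp_all
    ultimately have "12 * real k powr (-\<alpha>) + 2 * real k powr (-\<alpha>/2)
        \<le> 12 * (real k powr (-(\<alpha> + \<beta> - 1) / 2) + real k powr (-\<alpha>)
              + real k powr (-1/2) + real k powr (-(1 - \<beta>)))"
      unfolding distrib_left by linarith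
    with medium_rounding_tv_bound[OF large rounding] show ?thesis by (rule order_trans)
  qed
  thus ?thesis by blast
qed

end
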